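(* Let $\mathscr H$ and $\mathscr F$ be RKHSs on sets $\mathcal X$ and $\mathcal Y$ with feature maps $\phi$ and $\psi$, let $\Phi=[\phi(x_1),\dots,\phi(x_m)]$ and $\Psi=[\psi(y_1),\dots,\psi(y_n)]$ each consist of linearly independent elements, let $B\in\mathbb R^{n\times m}$, and let $S=\Psi B\Phi^\top\colon\mathscr H\to\mathscr F$. Let $G_\Phi=\Phi^\top\Phi$ and $G_\Psi=\Psi^\top\Psi$. Let $\sigma_1,\dots,\sigma_r$ be the strictly positive eigenvalues and $\begin{bsmallmatrix}\mathbf w_i\\ \mathbf z_i\end{bsmallmatrix}\in\mathbb R^{n+m}$ ($\mathbf w_i\in\mathbb R^n$, $\mathbf z_i\in\mathbb R^m$) corresponding eigenvectors of the matrix $$\begin{bmatrix}0 & BG_\Phi\\ B^\top G_\Psi & 0\end{bmatrix}\in\mathbb R^{(n+m)\times(n+m)}.$$ Then the singular value decomposition of $S$ is $$S=\sum_{i=1}^r\sigma_i\Big[\big(\|\Psi\mathbf w_i\|_{\mathscr F}^{-1}\Psi\mathbf w_i\big)\otimes\big(\|\Phi\mathbf z_i\|_{\mathscr H}^{-1}\Phi\mathbf z_i\big)\Big].$$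
   Context: An RKHS $\mathscr H$ on $\mathcal X$ with kernel $k$ has feature map $\phi(x)=k(x,\cdot)$ (similarly $\mathscr F$ with kernel $l$, feature map $\psi$). Feature matrices are row vectors: $\Phi\mathbf a=\sum_j a_j\phi(x_j)$ for $\mathbf a\in\mathbb R^m$; $\Phi^\top v=(\langle\phi(x_j),v\rangle_{\mathscr H})_j$ for $v\in\mathscr H$; $G_\Phi=(k(x_i,x_j))_{ij}$ and $G_\Psi=(l(y_i,y_j))_{ij}$ are the Gram matrices. Thus $Sv=\sum_i\psi(y_i)\sum_jb_{ij}\langle\phi(x_j),v\rangle$. The tensor product operator is $(y\otimes x)h=\langle x,h\rangle y$; a singular value decomposition $\sum_i\sigma_i(u_i\otimes v_i)$ has orthonormal systems $\{u_i\}\subseteq\mathscr F$, $\{v_i\}\subseteq\mathscr H$ and $\sigma_i>0$.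
   Formalization: Eigenvectors for equal eigenvalues are chosen with the vectors $\Phi\mathbf z_i$ pairwise orthogonal in $\mathscr H$, and the eigenvectors listed for each positive eigenvalue span its whole eigenspace. The statement above fails without it. *)

theory Defs
  imports "HOL-Analysis.Analysis"
begin

text \<open>An RKHS is represented abstractly by a real Hilbert space together with a
feature map phi; the kernel is k x y = inner (phi x) (phi y).  The RKHS property
(every element is determined by its point evaluations f(x) = inner f (phi x))
is the condition below: it makes f mapsto (x mapsto inner f (phi x)) an isometric
isomorphism onto a reproducing kernel Hilbert space of functions on X.\<close>
definition rkhs_feature_map :: "('x \<Rightarrow> 'h::real_inner) \<Rightarrow> bool" where
  "rkhs_feature_map \<phi> \<longleftrightarrow> (\<forall>f. (\<forall>x. inner f (\<phi> x) = 0) \<longrightarrow> f = 0)"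

definition fmat :: "('x \<Rightarrow> 'h::real_vector) \<Rightarrow> ('m::finite \<Rightarrow> 'x) \<Rightarrow> real^'m \<Rightarrow> 'h" where
  "fmat \<phi> xs a = (\<Sum>j\<in>UNIV. (a $ j) *\<^sub>R \<phi> (xs j))"

definition fadj :: "('x \<Rightarrow> 'h::real_inner) \<Rightarrow> ('m::finite \<Rightarrow> 'x) \<Rightarrow> 'h \<Rightarrow> real^'m" where
  "fadj \<phi> xs v = (\<chi> j. inner (\<phi> (xs j)) v)"

definition gram :: "('x \<Rightarrow> 'h::real_inner) \<Rightarrow> ('m::finite \<Rightarrow> 'x) \<Rightarrow> real^'m^'m" where
  "gram \<phi> xs = (\<chi> i j. inner (\<phi> (xs i)) (\<phi> (xs j)))"

definition tensor :: "'f::real_vector \<Rightarrow> 'h::real_inner \<Rightarrow> 'h \<Rightarrow> 'f" where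
  "tensor y x h = inner x h *\<^sub>R y"

text \<open>The block matrix [[0, B G_Phi], [B^T G_Psi, 0]] indexed by 'n + 'm
(Inl = first n coordinates, Inr = last m coordinates).\<close>
definition block_matrix ::
  "real^'m^'n \<Rightarrow> real^'m^'m \<Rightarrow> real^'n^'n \<Rightarrow> real^('n::finite + 'm::finite)^('n + 'm)" where
  "block_matrix B G\<^sub>\<Phi> G\<^sub>\<Psi> = (\<chi> p q. (case (p, q) of
       (Inl i, Inr j) \<Rightarrow> (B ** G\<^sub>\<Phi>) $ i $ j
     | (Inr j, Inl i) \<Rightarrow> (transpose B ** G\<^sub>\<Psi>) $ j $ i
     | _ \<Rightarrow> 0))"

definition blk_top :: "real^('n::finite + 'm::finite) \<Rightarrow> real^'n" where
  "blk_top v = (\<chi> k. v $ Inl k)"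

definition blk_bot :: "real^('n::finite + 'm::finite) \<Rightarrow> real^'m" where
  "blk_bot v = (\<chi> k. v $ Inr k)"

definition eigenspace :: "real^'k^'k \<Rightarrow> real \<Rightarrow> (real^'k::finite) set" where
  "eigenspace A c = {v. A *v v = c *s v}"

definition orthonormal_sys :: "nat \<Rightarrow> (nat \<Rightarrow> 'a::real_inner) \<Rightarrow> bool" where
  "orthonormal_sys r u \<longleftrightarrow> (\<forall>i<r. \<forall>j<r. inner (u i) (u j) = (if i = j then 1 else 0))"

definition is_svd :: "('h::real_inner \<Rightarrow> 'f::real_inner) \<Rightarrow> nat \<Rightarrow> (nat \<Rightarrow> real)
    \<Rightarrow> (nat \<Rightarrow> 'f) \<Rightarrow> (nat \<Rightarrow> 'h) \<Rightarrow> bool" where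
  "is_svd S r \<sigma> u v \<longleftrightarrow> (\<forall>i<r. \<sigma> i > 0) \<and> orthonormal_sys r u \<and> orthonormal_sys r v
     \<and> (\<forall>h. S h = (\<Sum>i<r. \<sigma> i *\<^sub>R tensor (u i) (v i) h))"

end

theory Submission
  imports Defs
begin

text \<open>
  Write \<open>u\<^sub>i = \<Psi> w\<^sub>i\<close> and \<open>v\<^sub>i = \<Phi> z\<^sub>i\<close>. The eigen-equation of the block matrix says
  exactly that \<open>S v\<^sub>i = \<sigma>\<^sub>i u\<^sub>i\<close> and \<open>S' u\<^sub>i = \<sigma>\<^sub>i v\<^sub>i\<close>, where \<open>S' = \<Phi> B\<^sup>T \<Psi>\<^sup>T\<close> is the
  adjoint of \<open>S\<close>. Such singular pairs have \<open>\<parallel>u\<^sub>i\<parallel> = \<parallel>v\<^sub>i\<parallel>\<close>, and the \<open>v\<^sub>i\<close> (hence the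
  \<open>u\<^sub>i\<close>) are orthogonal for distinct \<open>\<sigma>\<^sub>i\<close>, being eigenvectors of \<open>S' S\<close> for the
  eigenvalues \<open>\<sigma>\<^sub>i\<^sup>2\<close>; for equal \<open>\<sigma>\<^sub>i\<close> orthogonality is assumed.

  It remains to show that \<open>S\<close> vanishes on the orthogonal complement of the \<open>v\<^sub>i\<close>; since
  \<open>S\<close> factors through \<open>\<Phi>\<^sup>T\<close>, it suffices to consider vectors \<open>\<Phi> a\<close>. If \<open>S\<close> did not vanish
  there, a maximiser of the Rayleigh quotient \<open>\<parallel>S (\<Phi> a)\<parallel>\<^sup>2 / \<parallel>\<Phi> a\<parallel>\<^sup>2\<close> over the
  coefficient vectors \<open>a\<close> of that complement would satisfy
  \<open>B\<^sup>T G\<^sub>\<Psi> B G\<^sub>\<Phi> a = c a\<close> with \<open>c > 0\<close>, so \<open>(B G\<^sub>\<Phi> a / \<surd>c, a)\<close> would be an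
  eigenvector of the block matrix for \<open>\<surd>c\<close> outside the span of the given ones.
\<close>

lemma linear_fmat: "linear (fmat \<phi> xs)"
  by (rule linearI) (simp_all add: fmat_def scaleR_add_left sum.distrib scaleR_right.sum)

lemma linear_fadj: "linear (fadj \<phi> xs)"
  by (rule linearI) (simp_all add: fadj_def vec_eq_iff inner_add_right)

lemma inner_fmat_left: "inner (fmat \<phi> xs a) h = a \<bullet> fadj \<phi> xs h"
  by (simp add: fmat_def fadj_def inner_sum_left inner_vec_def)

lemma fadj_fmat: "fadj \<phi> xs (fmat \<phi> xs a) = gram \<phi> xs *v a"
  by (simp add: vec_eq_iff fadj_def fmat_def gram_def matrix_vector_mult_def inner_sum_right
      mult.commute)

lemma exists_fadj_fmat_eq:
  assumes "\<forall>a. fmat \<phi> xs a = 0 \<longrightarrow> a = 0"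
  shows "\<exists>a. fadj \<phi> xs (fmat \<phi> xs a) = fadj \<phi> xs h"
proof -
  have "inj ((*v) (gram \<phi> xs))"
    unfolding linear_injective_0[OF matrix_vector_mul_linear]
    using assms by (metis fadj_fmat inner_fmat_left inner_eq_zero_iff inner_zero_right)
  then have "surj ((*v) (gram \<phi> xs))"
    using linear_injective_imp_surjective matrix_vector_mul_linear by blast
  then show ?thesis
    by (metis fadj_fmat surjD)
qed

definition feature_op ::
    "('y \<Rightarrow> 'f::real_vector) \<Rightarrow> ('n::finite \<Rightarrow> 'y) \<Rightarrow> real^'m^'n
      \<Rightarrow> ('x \<Rightarrow> 'h::real_inner) \<Rightarrow> ('m::finite \<Rightarrow> 'x) \<Rightarrow> 'h \<Rightarrow> 'f" where
  "feature_op \<psi> ys B \<phi> xs v = fmat \<psi> ys (B *v fadj \<phi> xs v)"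

lemma linear_feature_op: "linear (feature_op \<psi> ys B \<phi> xs)"
  using linear_compose[OF linear_compose[OF linear_fadj matrix_vector_mul_linear] linear_fmat]
  unfolding feature_op_def[abs_def] by (simp add: o_def)

lemma feature_op_fmat:
  "feature_op \<psi> ys B \<phi> xs (fmat \<phi> xs a) = fmat \<psi> ys (B *v (gram \<phi> xs *v a))"
  by (simp add: feature_op_def fadj_fmat)

lemma inner_feature_op_adjoint:
  "inner (feature_op \<psi> ys B \<phi> xs h) k = inner h (feature_op \<phi> xs (transpose B) \<psi> ys k)"
proof -
  have "inner (feature_op \<psi> ys B \<phi> xs h) k = (B *v fadj \<phi> xs h) \<bullet> fadj \<psi> ys k"
    by (simp add: feature_op_def inner_fmat_left)
  also have "\<dots> = (transpose B *v fadj \<psi> ys k) \<bullet> fadj \<phi> xs h"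
    by (metis dot_lmul_matrix inner_commute transpose_matrix_vector)
  also have "\<dots> = inner h (feature_op \<phi> xs (transpose B) \<psi> ys k)"
    by (metis feature_op_def inner_fmat_left inner_commute)
  finally show ?thesis .
qed

definition blk_join :: "real^'n \<Rightarrow> real^'m \<Rightarrow> real^('n::finite + 'm::finite)" where
  "blk_join w z = (\<chi> p. case p of Inl k \<Rightarrow> w $ k | Inr k \<Rightarrow> z $ k)"

lemma blk_top_join [simp]: "blk_top (blk_join w z) = w"
  by (simp add: blk_top_def blk_join_def vec_eq_iff)

lemma blk_bot_join [simp]: "blk_bot (blk_join w z) = z"
  by (simp add: blk_bot_def blk_join_def vec_eq_iff)

lemma blk_join_top_bot: "blk_join (blk_top e) (blk_bot e) = e"
  by (simp add: blk_join_def blk_top_def blk_bot_def vec_eq_iff split: sum.split)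

lemma blk_join_0 [simp]: "blk_join 0 0 = 0"
  by (simp add: blk_join_def vec_eq_iff split: sum.split)

lemma linear_blk_bot: "linear blk_bot"
  by (rule linearI) (simp_all add: blk_bot_def vec_eq_iff)

lemma block_matrix_mult_Inl:
  "(block_matrix B G H *v e) $ Inl i = ((B ** G) *v blk_bot e) $ i"
proof -
  have "(block_matrix B G H *v e) $ Inl i = (\<Sum>q\<in>UNIV <+> UNIV. block_matrix B G H $ Inl i $ q * e $ q)"
    by (simp add: matrix_vector_mult_def)
  also have "\<dots> = ((B ** G) *v blk_bot e) $ i"
    by (subst sum.Plus) (simp_all add: block_matrix_def blk_bot_def matrix_vector_mult_def)
  finally show ?thesis .
qed

lemma block_matrix_mult_Inr:
  "(block_matrix B G H *v e) $ Inr j = ((transpose B ** H) *v blk_top e) $ j"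
proof -
  have "(block_matrix B G H *v e) $ Inr j = (\<Sum>q\<in>UNIV <+> UNIV. block_matrix B G H $ Inr j $ q * e $ q)"
    by (simp add: matrix_vector_mult_def)
  also have "\<dots> = ((transpose B ** H) *v blk_top e) $ j"
    by (subst sum.Plus) (simp_all add: block_matrix_def blk_top_def matrix_vector_mult_def)
  finally show ?thesis .
qed

lemma block_matrix_eigen_iff:
  "block_matrix B G H *v e = c *s e \<longleftrightarrow>
     B *v (G *v blk_bot e) = c *s blk_top e \<and> transpose B *v (H *v blk_top e) = c *s blk_bot e"
  by (simp add: vec_eq_iff split_sum_all block_matrix_mult_Inl block_matrix_mult_Inr
      blk_top_def blk_bot_def matrix_vector_mul_assoc del: transpose_matrix_vector)

lemma blk_bot_neq_0_if_eigenvector: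
  assumes "block_matrix B G H *v e = c *s e" "c \<noteq> 0" "e \<noteq> 0"
  shows "blk_bot e \<noteq> 0"
  using assms blk_join_top_bot[of e] by (auto simp: block_matrix_eigen_iff)

lemma block_matrix_eigenvector_of_product:
  assumes "transpose B *v (H *v (B *v (G *v a))) = c *s a" "c > 0"
  defines "e \<equiv> blk_join ((1 / sqrt c) *s (B *v (G *v a))) a"
  shows "block_matrix B G H *v e = sqrt c *s e"
proof -
  have "transpose B *v (H *v ((1 / sqrt c) *s (B *v (G *v a)))) = (c / sqrt c) *s a"
    using assms(1) by (simp add: matrix_vector_mult_scaleR scalar_mult_eq_scaleR)
  also have "c / sqrt c = sqrt c"
    using assms(2) by (simp add: real_div_sqrt)
  finally show ?thesis
    using assms(2) unfolding e_def block_matrix_eigen_iff blk_top_join blk_bot_join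
    by (simp add: scalar_mult_eq_scaleR del: transpose_matrix_vector)
qed

lemma orthonormal_sys_normalize:
  fixes x :: "nat \<Rightarrow> 'a::real_inner"
  assumes "\<forall>i<r. x i \<noteq> 0" and "\<forall>i<r. \<forall>j<r. i \<noteq> j \<longrightarrow> inner (x i) (x j) = 0"
  shows "orthonormal_sys r (\<lambda>i. (1 / norm (x i)) *\<^sub>R x i)"
  using assms by (simp add: orthonormal_sys_def dot_square_norm power2_eq_square)

lemma orthonormal_sys_inner_residual:
  assumes "orthonormal_sys r e" "j < r"
  shows "inner (h - (\<Sum>i<r. inner (e i) h *\<^sub>R e i)) (e j) = 0"
proof -
  have "inner (h - (\<Sum>i<r. inner (e i) h *\<^sub>R e i)) (e j)
      = inner h (e j) - (\<Sum>i<r. inner (e i) h * inner (e i) (e j))"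
    by (simp add: inner_diff_left inner_sum_left)
  also have "(\<Sum>i<r. inner (e i) h * inner (e i) (e j)) = (\<Sum>i<r. if i = j then inner (e j) h else 0)"
    using assms by (intro sum.cong) (auto simp: orthonormal_sys_def)
  finally show ?thesis
    using assms(2) by (simp add: inner_commute)
qed

lemma linear_eq_sum_tensor:
  assumes "linear S" and "orthonormal_sys r e" and "\<forall>i<r. S (e i) = \<sigma> i *\<^sub>R f i"
    and "\<forall>h. (\<forall>j<r. inner h (e j) = 0) \<longrightarrow> S h = 0"
  shows "S h = (\<Sum>i<r. \<sigma> i *\<^sub>R tensor (f i) (e i) h)"
proof -
  define q where "q = h - (\<Sum>i<r. inner (e i) h *\<^sub>R e i)"
  have "S h = S (q + (\<Sum>i<r. inner (e i) h *\<^sub>R e i))"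
    by (simp add: q_def)
  also have "\<dots> = S q + (\<Sum>i<r. inner (e i) h *\<^sub>R S (e i))"
    by (simp add: linear_add[OF assms(1)] linear_sum[OF assms(1)] linear_cmul[OF assms(1)] o_def)
  also have "S q = 0"
    using assms(2,4) orthonormal_sys_inner_residual q_def by blast
  also have "0 + (\<Sum>i<r. inner (e i) h *\<^sub>R S (e i)) = (\<Sum>i<r. \<sigma> i *\<^sub>R tensor (f i) (e i) h)"
    using assms(3) by (simp add: tensor_def mult.commute)
  finally show ?thesis .
qed

lemma linear_coeff_eq_0_if_quadratic_nonpos:
  fixes X Y :: real
  assumes "\<forall>t. 2 * t * X + t\<^sup>2 * Y \<le> 0"
  shows "X = 0"
proof -
  define s where "s = \<bar>Y\<bar> + 1"
  have s: "s > 0" "2 * s + Y > 0"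
    by (auto simp: s_def abs_if)
  have "2 * (X / s) * X + (X / s)\<^sup>2 * Y = X\<^sup>2 * (2 * s + Y) / s\<^sup>2"
    using s by (simp add: field_simps power2_eq_square)
  then have "X\<^sup>2 * (2 * s + Y) / s\<^sup>2 \<le> 0"
    using assms by metis
  then have "X\<^sup>2 \<le> 0"
    using s by (simp add: divide_le_0_iff mult_le_0_iff)
  then show ?thesis
    by simp
qed

lemma scale_invariant_attains_max_on_subspace:
  fixes R :: "'a::euclidean_space \<Rightarrow> real"
  assumes "subspace W" "continuous_on (W \<inter> sphere 0 1) R"
    and "\<And>a. R ((1 / norm a) *\<^sub>R a) = R a" and "b \<in> W" "b \<noteq> 0"
  obtains a0 where "a0 \<in> W" "a0 \<noteq> 0" "\<And>b. b \<in> W \<Longrightarrow> b \<noteq> 0 \<Longrightarrow> R b \<le> R a0"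
proof -
  have normalize_in_sphere: "(1 / norm a) *\<^sub>R a \<in> W \<inter> sphere 0 1" if "a \<in> W" "a \<noteq> 0" for a
    using that assms(1) by (simp add: subspace_scale)
  have "compact (W \<inter> sphere 0 1)"
    using closed_subspace[OF assms(1)] compact_sphere by (rule closed_Int_compact)
  moreover have "W \<inter> sphere 0 1 \<noteq> {}"
    using normalize_in_sphere assms(4,5) by blast
  ultimately obtain a0 where a0: "a0 \<in> W \<inter> sphere 0 1" "\<forall>a\<in>W \<inter> sphere 0 1. R a \<le> R a0"
    using continuous_attains_sup[OF _ _ assms(2)] by blast
  show ?thesis
  proof (rule that)
    show "a0 \<in> W" "a0 \<noteq> 0"
      using a0(1) by auto
    fix b assume "b \<in> W" "b \<noteq> 0"
    then have "R ((1 / norm b) *\<^sub>R b) \<le> R a0"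
      using a0(2) normalize_in_sphere by blast
    then show "R b \<le> R a0"
      by (simp only: assms(3))
  qed
qed

lemma rayleigh_quotient_attains_max:
  fixes \<Phi> :: "'a::euclidean_space \<Rightarrow> 'h::real_normed_vector" and L :: "'a \<Rightarrow> 'f::real_normed_vector"
  assumes "linear \<Phi>" "linear L" "\<And>a. \<Phi> a = 0 \<Longrightarrow> a = 0"
    and "subspace W" "b \<in> W" "L b \<noteq> 0"
  obtains a0 c where "a0 \<in> W" "a0 \<noteq> 0" "c > 0" "(norm (L a0))\<^sup>2 = c * (norm (\<Phi> a0))\<^sup>2"
    "\<And>b. b \<in> W \<Longrightarrow> (norm (L b))\<^sup>2 \<le> c * (norm (\<Phi> b))\<^sup>2"
proof -
  define R where "R a = (norm (L a))\<^sup>2 / (norm (\<Phi> a))\<^sup>2" for a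
  have "continuous_on (W \<inter> sphere 0 1) R"
  proof -
    have "bounded_linear \<Phi>" "bounded_linear L"
      using assms(1,2) linear_conv_bounded_linear by auto
    then show ?thesis
      unfolding R_def by (intro continuous_intros linear_continuous_on) (auto dest: assms(3))
  qed
  moreover have "R ((1 / norm a) *\<^sub>R a) = R a" for a
    by (simp add: R_def linear_cmul[OF assms(1)] linear_cmul[OF assms(2)] power_divide
        power_mult_distrib linear_0[OF assms(1)] linear_0[OF assms(2)])
  moreover have "b \<noteq> 0"
    using assms(6) linear_0[OF assms(2)] by blast
  ultimately obtain a0 where a0: "a0 \<in> W" "a0 \<noteq> 0" and max: "\<And>b. b \<in> W \<Longrightarrow> b \<noteq> 0 \<Longrightarrow> R b \<le> R a0"
    using scale_invariant_attains_max_on_subspace[OF assms(4) _ _ assms(5)] by blast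
  have bound: "(norm (L b))\<^sup>2 \<le> R a0 * (norm (\<Phi> b))\<^sup>2" if "b \<in> W" for b
  proof (cases "b = 0")
    case True
    then show ?thesis
      by (simp add: linear_0[OF assms(1)] linear_0[OF assms(2)])
  next
    case False
    then have "\<Phi> b \<noteq> 0"
      using assms(3) by blast
    then show ?thesis
      using max[OF that False] by (simp add: R_def divide_le_eq)
  qed
  have "\<Phi> b \<noteq> 0"
    using assms(3) \<open>b \<noteq> 0\<close> by blast
  then have "0 < R b"
    using assms(6) by (simp add: R_def)
  also have "R b \<le> R a0"
    using max assms(5) \<open>b \<noteq> 0\<close> by blast
  finally have "R a0 > 0" .
  moreover have "(norm (L a0))\<^sup>2 = R a0 * (norm (\<Phi> a0))\<^sup>2"
    using assms(3) a0(2) by (auto simp: R_def)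
  ultimately show ?thesis
    using that a0 bound by blast
qed

lemma rayleigh_quotient_max_stationary:
  fixes \<Phi> :: "'a::real_vector \<Rightarrow> 'h::real_inner" and L :: "'a \<Rightarrow> 'f::real_inner"
  assumes "linear \<Phi>" "linear L" "subspace W" "a0 \<in> W" "b \<in> W"
    and "(norm (L a0))\<^sup>2 = c * (norm (\<Phi> a0))\<^sup>2"
    and "\<And>b. b \<in> W \<Longrightarrow> (norm (L b))\<^sup>2 \<le> c * (norm (\<Phi> b))\<^sup>2"
  shows "inner (L a0) (L b) = c * inner (\<Phi> a0) (\<Phi> b)"
proof -
  have max: "inner (L a0) (L a0) = c * inner (\<Phi> a0) (\<Phi> a0)"
    using assms(6) by (simp add: power2_norm_eq_inner)
  have "2 * t * (inner (L a0) (L b) - c * inner (\<Phi> a0) (\<Phi> b))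
      + t\<^sup>2 * (inner (L b) (L b) - c * inner (\<Phi> b) (\<Phi> b)) \<le> 0" for t
  proof -
    have "a0 + t *\<^sub>R b \<in> W"
      using assms(3-5) by (simp add: subspace_add subspace_scale)
    note assms(7)[OF this]
    then have "inner (L a0 + t *\<^sub>R L b) (L a0 + t *\<^sub>R L b)
        \<le> c * inner (\<Phi> a0 + t *\<^sub>R \<Phi> b) (\<Phi> a0 + t *\<^sub>R \<Phi> b)"
      by (simp add: power2_norm_eq_inner linear_add[OF assms(1)] linear_add[OF assms(2)]
          linear_cmul[OF assms(1)] linear_cmul[OF assms(2)])
    then show ?thesis
      using max by (simp add: inner_add_left inner_add_right inner_commute
          power2_eq_square algebra_simps)
  qed
  then show ?thesis
    using linear_coeff_eq_0_if_quadratic_nonpos by fastforce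
qed

lemma rayleigh_positive_eigenvector:
  fixes \<Phi> :: "'a::euclidean_space \<Rightarrow> 'h::real_inner" and L :: "'a \<Rightarrow> 'f::real_inner"
  assumes "linear \<Phi>" "linear L" "\<And>a. \<Phi> a = 0 \<Longrightarrow> a = 0"
    and "\<And>a b. inner (\<Phi> (N a)) (\<Phi> b) = inner (L a) (L b)"
    and "subspace W" "\<And>a. a \<in> W \<Longrightarrow> N a \<in> W" "b \<in> W" "L b \<noteq> 0"
  obtains a0 c where "a0 \<in> W" "a0 \<noteq> 0" "c > 0" "N a0 = c *\<^sub>R a0"
proof -
  obtain a0 c where a0: "a0 \<in> W" "a0 \<noteq> 0" "c > 0"
    and max: "(norm (L a0))\<^sup>2 = c * (norm (\<Phi> a0))\<^sup>2"
    and bound: "\<And>b. b \<in> W \<Longrightarrow> (norm (L b))\<^sup>2 \<le> c * (norm (\<Phi> b))\<^sup>2"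
    using rayleigh_quotient_attains_max[OF assms(1-3,5,7,8)] by blast
  define d where "d = N a0 - c *\<^sub>R a0"
  have "d \<in> W"
    using a0(1) assms(5,6) by (simp add: d_def subspace_diff subspace_scale)
  have "\<Phi> d = \<Phi> (N a0) - c *\<^sub>R \<Phi> a0"
    by (simp add: d_def linear_diff[OF assms(1)] linear_cmul[OF assms(1)])
  then have "inner (\<Phi> d) (\<Phi> d) = inner (\<Phi> (N a0)) (\<Phi> d) - c * inner (\<Phi> a0) (\<Phi> d)"
    by (metis inner_diff_left inner_scaleR_left)
  also have "\<dots> = inner (L a0) (L d) - c * inner (\<Phi> a0) (\<Phi> d)"
    by (simp only: assms(4))
  also have "\<dots> = 0"
    using rayleigh_quotient_max_stationary[OF assms(1,2,5) a0(1) \<open>d \<in> W\<close> max bound] by simp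
  finally have "d = 0"
    using assms(3) by simp
  then have "N a0 = c *\<^sub>R a0"
    by (simp add: d_def)
  with a0 that show ?thesis
    by blast
qed

locale singular_system =
  fixes S :: "'h::real_inner \<Rightarrow> 'f::real_inner" and S' :: "'f \<Rightarrow> 'h"
    and r :: nat and \<sigma> :: "nat \<Rightarrow> real" and u :: "nat \<Rightarrow> 'f" and v :: "nat \<Rightarrow> 'h"
  assumes linear: "linear S"
    and adjoint: "inner (S h) k = inner h (S' k)"
    and sigma_pos: "i < r \<Longrightarrow> \<sigma> i > 0"
    and S_v: "i < r \<Longrightarrow> S (v i) = \<sigma> i *\<^sub>R u i"
    and S'_u: "i < r \<Longrightarrow> S' (u i) = \<sigma> i *\<^sub>R v i"
begin

lemma inner_u_u: "i < r \<Longrightarrow> j < r \<Longrightarrow> \<sigma> i * inner (u i) (u j) = \<sigma> j * inner (v i) (v j)"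
  using adjoint[of "v i" "u j"] by (simp add: S_v S'_u)

lemma norm_u_eq_norm_v: "i < r \<Longrightarrow> norm (u i) = norm (v i)"
  using inner_u_u[of i i] sigma_pos[of i] by (simp add: norm_eq_sqrt_inner)

lemma inner_S_S_v: "j < r \<Longrightarrow> inner (S h) (S (v j)) = (\<sigma> j)\<^sup>2 * inner h (v j)"
  by (simp add: S_v adjoint S'_u power2_eq_square)

lemma inner_S'_S_v: "j < r \<Longrightarrow> inner (S' (S h)) (v j) = (\<sigma> j)\<^sup>2 * inner h (v j)"
  by (metis adjoint inner_commute inner_S_S_v)

lemma inner_v_v_eq_0:
  assumes "i < r" "j < r" "\<sigma> i \<noteq> \<sigma> j"
  shows "inner (v i) (v j) = 0"
proof -
  have "(\<sigma> j)\<^sup>2 * inner (v i) (v j) = (\<sigma> i)\<^sup>2 * inner (v i) (v j)"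
    using inner_S_S_v[of j "v i"] inner_S_S_v[of i "v j"] assms(1,2)
    by (simp add: inner_commute)
  moreover have "(\<sigma> j)\<^sup>2 \<noteq> (\<sigma> i)\<^sup>2"
    using assms sigma_pos by (simp add: power2_eq_iff_nonneg less_imp_le)
  ultimately show ?thesis
    by simp
qed

lemma is_svd_normalized:
  assumes "\<forall>i<r. v i \<noteq> 0"
    and "\<forall>i<r. \<forall>j<r. i \<noteq> j \<and> \<sigma> i = \<sigma> j \<longrightarrow> inner (v i) (v j) = 0"
    and "\<forall>h. (\<forall>j<r. inner h (v j) = 0) \<longrightarrow> S h = 0"
  shows "is_svd S r \<sigma> (\<lambda>i. (1 / norm (u i)) *\<^sub>R u i) (\<lambda>i. (1 / norm (v i)) *\<^sub>R v i)"
proof -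
  have orth_v: "\<forall>i<r. \<forall>j<r. i \<noteq> j \<longrightarrow> inner (v i) (v j) = 0"
    using assms(2) inner_v_v_eq_0 by blast
  have orth_u: "\<forall>i<r. \<forall>j<r. i \<noteq> j \<longrightarrow> inner (u i) (u j) = 0"
    using orth_v inner_u_u sigma_pos by (metis less_irrefl mult_eq_0_iff mult_zero_right)
  have "\<forall>i<r. u i \<noteq> 0"
    using assms(1) norm_u_eq_norm_v by (metis norm_eq_zero)
  then have ons_u: "orthonormal_sys r (\<lambda>i. (1 / norm (u i)) *\<^sub>R u i)"
    using orth_u by (rule orthonormal_sys_normalize)
  have ons_v: "orthonormal_sys r (\<lambda>i. (1 / norm (v i)) *\<^sub>R v i)"
    using assms(1) orth_v by (rule orthonormal_sys_normalize)
  have S_vn: "\<forall>i<r. S ((1 / norm (v i)) *\<^sub>R v i) = \<sigma> i *\<^sub>R ((1 / norm (u i)) *\<^sub>R u i)"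
    using S_v norm_u_eq_norm_v by (simp add: linear_cmul[OF linear])
  have ker: "\<forall>h. (\<forall>j<r. inner h ((1 / norm (v j)) *\<^sub>R v j) = 0) \<longrightarrow> S h = 0"
  proof (intro allI impI)
    fix h assume "\<forall>j<r. inner h ((1 / norm (v j)) *\<^sub>R v j) = 0"
    then have "\<forall>j<r. inner h (v j) = 0"
      using assms(1) by simp
    then show "S h = 0"
      using assms(3) by blast
  qed
  have "S h = (\<Sum>i<r. \<sigma> i *\<^sub>R
      tensor ((1 / norm (u i)) *\<^sub>R u i) ((1 / norm (v i)) *\<^sub>R v i) h)" for h
    using linear ons_v S_vn ker by (rule linear_eq_sum_tensor)
  then show ?thesis
    using sigma_pos ons_u ons_v unfolding is_svd_def by blast
qed

end

lemma singular_system_block_eigenvectors: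
  assumes "\<forall>i<r. \<sigma> i > 0 \<and> block_matrix B (gram \<phi> xs) (gram \<psi> ys) *v e i = \<sigma> i *s e i"
  shows "singular_system (feature_op \<psi> ys B \<phi> xs) (feature_op \<phi> xs (transpose B) \<psi> ys) r \<sigma>
           (\<lambda>i. fmat \<psi> ys (blk_top (e i))) (\<lambda>i. fmat \<phi> xs (blk_bot (e i)))"
proof (rule singular_system.intro[OF linear_feature_op inner_feature_op_adjoint])
  fix i assume "i < r"
  then have "\<sigma> i > 0"
    and "B *v (gram \<phi> xs *v blk_bot (e i)) = \<sigma> i *s blk_top (e i)"
    and "transpose B *v (gram \<psi> ys *v blk_top (e i)) = \<sigma> i *s blk_bot (e i)"
    using assms by (simp_all add: block_matrix_eigen_iff del: transpose_matrix_vector)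
  then show "\<sigma> i > 0"
    and "feature_op \<psi> ys B \<phi> xs (fmat \<phi> xs (blk_bot (e i))) = \<sigma> i *\<^sub>R fmat \<psi> ys (blk_top (e i))"
    and "feature_op \<phi> xs (transpose B) \<psi> ys (fmat \<psi> ys (blk_top (e i))) = \<sigma> i *\<^sub>R fmat \<phi> xs (blk_bot (e i))"
    by (simp_all add: feature_op_fmat scalar_mult_eq_scaleR linear_cmul[OF linear_fmat]
        del: transpose_matrix_vector)
qed

lemma fmat_eq_0_if_orthogonal_to_eigenspace:
  assumes "\<forall>c>0. eigenspace (block_matrix B G H) c \<subseteq> span (e ` {i. i < r \<and> \<sigma> i = c})"
    and "transpose B *v (H *v (B *v (G *v a))) = c *s a" "c > 0"
    and "\<forall>j<r. \<sigma> j = sqrt c \<longrightarrow> inner (fmat \<phi> xs a) (fmat \<phi> xs (blk_bot (e j))) = 0"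
  shows "fmat \<phi> xs a = 0"
proof -
  let ?I = "{i. i < r \<and> \<sigma> i = sqrt c}"
  have "blk_join ((1 / sqrt c) *s (B *v (G *v a))) a \<in> eigenspace (block_matrix B G H) (sqrt c)"
    using block_matrix_eigenvector_of_product[OF assms(2,3)] by (simp add: eigenspace_def)
  then have "blk_join ((1 / sqrt c) *s (B *v (G *v a))) a \<in> span (e ` ?I)"
    using assms(1,3) by (meson real_sqrt_gt_zero subsetD)
  then have "a \<in> span (blk_bot ` e ` ?I)"
    using imageI[of _ _ blk_bot] by (fastforce simp: span_linear_image[OF linear_blk_bot])
  then have "fmat \<phi> xs a \<in> span (fmat \<phi> xs ` blk_bot ` e ` ?I)"
    using imageI[of _ _ "fmat \<phi> xs"] by (fastforce simp: span_linear_image[OF linear_fmat])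
  moreover have "orthogonal (fmat \<phi> xs a) y" if "y \<in> fmat \<phi> xs ` blk_bot ` e ` ?I" for y
    using that assms(4) by (auto simp: orthogonal_def)
  ultimately have "orthogonal (fmat \<phi> xs a) (fmat \<phi> xs a)"
    by (rule orthogonal_to_span)
  then show ?thesis
    by (simp add: orthogonal_def)
qed

lemma feature_op_fmat_eq_0_if_orthogonal:
  fixes \<phi> :: "'x \<Rightarrow> 'h::real_inner" and \<psi> :: "'y \<Rightarrow> 'f::real_inner"
    and xs :: "'m::finite \<Rightarrow> 'x" and ys :: "'n::finite \<Rightarrow> 'y" and B :: "real^'m^'n"
    and r :: nat
  defines "M \<equiv> block_matrix B (gram \<phi> xs) (gram \<psi> ys)"
  assumes indep: "\<forall>a. fmat \<phi> xs a = 0 \<longrightarrow> a = 0"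
    and eigen: "\<forall>i<r. \<sigma> i > 0 \<and> M *v e i = \<sigma> i *s e i"
    and complete: "\<forall>c>0. eigenspace M c \<subseteq> span (e ` {i. i < r \<and> \<sigma> i = c})"
    and orth: "\<forall>j<r. inner (fmat \<phi> xs a) (fmat \<phi> xs (blk_bot (e j))) = 0"
  shows "feature_op \<psi> ys B \<phi> xs (fmat \<phi> xs a) = 0"
proof (rule ccontr)
  let ?S = "feature_op \<psi> ys B \<phi> xs" and ?S' = "feature_op \<phi> xs (transpose B) \<psi> ys"
  let ?v = "\<lambda>j. fmat \<phi> xs (blk_bot (e j))"
  interpret singular_system ?S ?S' r \<sigma> "\<lambda>i. fmat \<psi> ys (blk_top (e i))" ?v
    using eigen unfolding M_def by (rule singular_system_block_eigenvectors)
  define W where "W = {a. \<forall>j<r. inner (fmat \<phi> xs a) (?v j) = 0}"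
  define N where "N a = transpose B *v (gram \<psi> ys *v (B *v (gram \<phi> xs *v a)))" for a
  have fmat_N: "fmat \<phi> xs (N a) = ?S' (?S (fmat \<phi> xs a))" for a
    by (simp add: N_def feature_op_fmat del: transpose_matrix_vector)
  have linear_S_fmat: "linear (\<lambda>a. ?S (fmat \<phi> xs a))"
    using linear_compose[OF linear_fmat linear_feature_op] by (simp add: o_def)
  have inner_fmat_N:
    "inner (fmat \<phi> xs (N a)) (fmat \<phi> xs b) = inner (?S (fmat \<phi> xs a)) (?S (fmat \<phi> xs b))" for a b
    unfolding fmat_N by (metis adjoint inner_commute)
  have "subspace W"
    by (simp add: W_def subspace_def linear_add[OF linear_fmat] linear_cmul[OF linear_fmat]
        linear_0[OF linear_fmat] inner_add_left)
  moreover have "N a \<in> W" if "a \<in> W" for a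
    using that by (simp add: W_def fmat_N inner_S'_S_v)
  moreover have "a \<in> W"
    using orth by (simp add: W_def)
  moreover assume "?S (fmat \<phi> xs a) \<noteq> 0"
  ultimately obtain a0 c where a0: "a0 \<in> W" "a0 \<noteq> 0" "c > 0" "N a0 = c *\<^sub>R a0"
    using rayleigh_positive_eigenvector[OF linear_fmat linear_S_fmat indep[rule_format] inner_fmat_N]
    by blast
  have "transpose B *v (gram \<psi> ys *v (B *v (gram \<phi> xs *v a0))) = c *s a0"
    using a0(4) by (simp add: N_def scalar_mult_eq_scaleR del: transpose_matrix_vector)
  moreover have "\<forall>j<r. \<sigma> j = sqrt c \<longrightarrow> inner (fmat \<phi> xs a0) (?v j) = 0"
    using a0(1) by (simp add: W_def)
  ultimately have "fmat \<phi> xs a0 = 0"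
    using fmat_eq_0_if_orthogonal_to_eigenspace[OF complete[unfolded M_def]] a0(3) by blast
  with indep \<open>a0 \<noteq> 0\<close> show False
    by blast
qed

lemma feature_op_eq_0_if_orthogonal:
  fixes \<phi> :: "'x \<Rightarrow> 'h::real_inner" and \<psi> :: "'y \<Rightarrow> 'f::real_inner"
    and xs :: "'m::finite \<Rightarrow> 'x" and ys :: "'n::finite \<Rightarrow> 'y" and B :: "real^'m^'n"
    and r :: nat
  defines "M \<equiv> block_matrix B (gram \<phi> xs) (gram \<psi> ys)"
  assumes indep: "\<forall>a. fmat \<phi> xs a = 0 \<longrightarrow> a = 0"
    and eigen: "\<forall>i<r. \<sigma> i > 0 \<and> M *v e i = \<sigma> i *s e i"
    and complete: "\<forall>c>0. eigenspace M c \<subseteq> span (e ` {i. i < r \<and> \<sigma> i = c})"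
    and orth: "\<forall>j<r. inner h (fmat \<phi> xs (blk_bot (e j))) = 0"
  shows "feature_op \<psi> ys B \<phi> xs h = 0"
proof -
  obtain a where a: "fadj \<phi> xs (fmat \<phi> xs a) = fadj \<phi> xs h"
    using exists_fadj_fmat_eq[OF indep] by blast
  have "inner (fmat \<phi> xs a) (fmat \<phi> xs z) = inner h (fmat \<phi> xs z)" for z
    by (metis a inner_commute inner_fmat_left)
  then have "feature_op \<psi> ys B \<phi> xs (fmat \<phi> xs a) = 0"
    using feature_op_fmat_eq_0_if_orthogonal[OF indep eigen[unfolded M_def] complete[unfolded M_def]]
      orth by simp
  then show ?thesis
    by (simp add: feature_op_def a)
qed

theorem theorem3p17:
  fixes \<phi> :: "'x \<Rightarrow> 'h::{real_inner, complete_space}"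
    and \<psi> :: "'y \<Rightarrow> 'f::{real_inner, complete_space}"
    and xs :: "'m::finite \<Rightarrow> 'x" and ys :: "'n::finite \<Rightarrow> 'y"
    and B :: "real^'m^'n" and S :: "'h \<Rightarrow> 'f"
    and r :: nat and \<sigma> :: "nat \<Rightarrow> real" and e :: "nat \<Rightarrow> real^('n + 'm)"
  assumes "rkhs_feature_map \<phi>" and "rkhs_feature_map \<psi>"
    and "\<forall>a. fmat \<phi> xs a = 0 \<longrightarrow> a = 0"
    and "\<forall>b. fmat \<psi> ys b = 0 \<longrightarrow> b = 0"
    and "S = (\<lambda>v. fmat \<psi> ys (B *v fadj \<phi> xs v))"
    and "\<forall>i<r. \<sigma> i > 0 \<and> e i \<noteq> 0 \<and>
           block_matrix B (gram \<phi> xs) (gram \<psi> ys) *v e i = \<sigma> i *s e i"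
    and "\<forall>c>0. span (e ` {i. i < r \<and> \<sigma> i = c})
                 = eigenspace (block_matrix B (gram \<phi> xs) (gram \<psi> ys)) c"
    and "\<forall>i<r. \<forall>j<r. i \<noteq> j \<and> \<sigma> i = \<sigma> j \<longrightarrow>
           inner (fmat \<phi> xs (blk_bot (e i))) (fmat \<phi> xs (blk_bot (e j))) = 0"
  shows "is_svd S r \<sigma>
           (\<lambda>i. (1 / norm (fmat \<psi> ys (blk_top (e i)))) *\<^sub>R fmat \<psi> ys (blk_top (e i)))
           (\<lambda>i. (1 / norm (fmat \<phi> xs (blk_bot (e i)))) *\<^sub>R fmat \<phi> xs (blk_bot (e i)))"
proof -
  have S_eq: "S = feature_op \<psi> ys B \<phi> xs"
    using assms(5) by (simp add: fun_eq_iff feature_op_def)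
  have eigen: "\<forall>i<r. \<sigma> i > 0 \<and> block_matrix B (gram \<phi> xs) (gram \<psi> ys) *v e i = \<sigma> i *s e i"
    using assms(6) by blast
  interpret singular_system S "feature_op \<phi> xs (transpose B) \<psi> ys" r \<sigma>
      "\<lambda>i. fmat \<psi> ys (blk_top (e i))" "\<lambda>i. fmat \<phi> xs (blk_bot (e i))"
    unfolding S_eq using eigen by (rule singular_system_block_eigenvectors)
  show ?thesis
  proof (rule is_svd_normalized)
    show "\<forall>i<r. fmat \<phi> xs (blk_bot (e i)) \<noteq> 0"
      using assms(3,6) blk_bot_neq_0_if_eigenvector by (metis less_irrefl)
    show "\<forall>h. (\<forall>j<r. inner h (fmat \<phi> xs (blk_bot (e j))) = 0) \<longrightarrow> S h = 0"
      using feature_op_eq_0_if_orthogonal[OF assms(3) eigen] assms(7) unfolding S_eq by blast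
  qed (use assms(8) in blast)
qed

end
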